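(* Let $n\ge 1$, let $M\in \mathrm{Sp}(2n,\mathbb{F}_2)$ be the symplectic matrix of an $n$-qubit Clifford operator $U$, and let $0\le w\le n$. Then there exist vectors $u_1,\dots,u_{4w}\in\mathbb{F}_2^{2n}$ such that the matrix $$M' := M\, S_{u_1} S_{u_2}\cdots S_{u_{4w}}$$ (i.e. first apply $E_{u_1}$ to every row of $M$, then $E_{u_2}$, and so on) satisfies $e_iM'=e_i$ and $f_iM'=f_i$ for all $1\le i\le w$, and $bM'\in\mathrm{span}\{e_j,f_j : w<j\le n\}$ for every $b\in\{e_j,f_j: w<j\le n\}$. Equivalently, the Clifford operator $R_{\pi/4}(P_{u_{4w}})\cdots R_{\pi/4}(P_{u_1})$ composed with $U$ (in the order corresponding to $M'$) has, up to Pauli operators and phases, support only on the last $n-w$ qubits; i.e. $4w$ Pauli $\pi/4$ rotations suffice to clean a Clifford frame off $w$ qubits.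
   Context: Paulis and Cliffords are represented in the binary symplectic formalism. An $n$-qubit Pauli operator is identified (up to phase) with a row vector $v\in\mathbb{F}_2^{2n}$ via $P_v=\prod_{i=1}^n X_i^{v_i}Z_i^{v_{n+i}}$. The symplectic form is $\langle u,v\rangle=uJv^T$ with $J=\begin{bmatrix}0&I_n\\ I_n&0\end{bmatrix}$; $P_u,P_v$ commute iff $\langle u,v\rangle=0$. Let $e_1,\dots,e_{2n}$ be the standard basis of $\mathbb{F}_2^{2n}$ and $f_k:=e_{n+k}$ ($e_k$ corresponds to $X_k$, $f_k$ to $Z_k$). A Clifford $U$ is represented (ignoring Pauli corrections and phases) by a matrix $M_U$ with $M_UJM_U^T=J$, acting by $v\mapsto vM_U$ (conjugation $P\mapsto UPU^\dagger$); its $i$-th row is the image of the $i$-th basis vector. The Pauli $\pi/4$ rotation $R_{\pi/4}(P_u)$ maps $P\mapsto PP_u$ if $P$ anticommutes with $P_u$ and fixes $P$ otherwise; in symplectic form it acts as the transvection $E_u(v)=v+\langle u,v\rangle u$, whose matrix (row-vector convention $v\mapsto vS_u$) is denoted $S_u$. Each such rotation can be implemented by one logical Pauli product measurement with an ancilla. *)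

theory Defs
  imports "HOL-Library.Z2" "Jordan_Normal_Form.VS_Connect"
begin

definition Jmat :: "nat \<Rightarrow> bit mat" where
  "Jmat n = four_block_mat (0\<^sub>m n n) (1\<^sub>m n) (1\<^sub>m n) (0\<^sub>m n n)"

definition symplectic :: "nat \<Rightarrow> bit mat \<Rightarrow> bool" where
  "symplectic n M \<longleftrightarrow> M \<in> carrier_mat (2*n) (2*n) \<and> M * Jmat n * transpose_mat M = Jmat n"

definition rmult :: "bit vec \<Rightarrow> bit mat \<Rightarrow> bit vec" (infixl "\<cdot>\<^sub>r" 70) where
  "v \<cdot>\<^sub>r M = vec (dim_col M) (\<lambda>j. v \<bullet> col M j)"

definition sform :: "nat \<Rightarrow> bit vec \<Rightarrow> bit vec \<Rightarrow> bit" where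
  "sform n u v = u \<bullet> (Jmat n *\<^sub>v v)"

definition transv :: "nat \<Rightarrow> bit vec \<Rightarrow> bit vec \<Rightarrow> bit vec" where
  "transv n u v = v + sform n u v \<cdot>\<^sub>v u"

definition Smat :: "nat \<Rightarrow> bit vec \<Rightarrow> bit mat" where
  "Smat n u = mat_of_rows (2*n) (map (\<lambda>i. transv n u (unit_vec (2*n) i)) [0..<2*n])"

text \<open>standard basis, 1-based as in the paper: e_k ~ X_k, f_k = e_{n+k} ~ Z_k\<close>
definition ebas :: "nat \<Rightarrow> nat \<Rightarrow> bit vec" where
  "ebas n k = unit_vec (2*n) (k - 1)"

definition fbas :: "nat \<Rightarrow> nat \<Rightarrow> bit vec" where
  "fbas n k = unit_vec (2*n) (n + k - 1)"

definition span2 :: "nat \<Rightarrow> bit vec set \<Rightarrow> bit vec set" where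
  "span2 n S = LinearCombinations.module.span class_ring (module_vec TYPE(bit) (2*n)) S"

end

theory Submission
  imports Defs
begin

(* Both v \<mapsto> v M and every transvection E_u preserve the symplectic form, hence so does
  any composite g of them. Since v_j = <v, e_{partner j}>, a form-preserving g that fixes the
  basis vectors of the first p qubits leaves every g v unchanged on their coordinates. So
  x = g e_{p+1} vanishes there, and x \<noteq> 0 because <x, g f_{p+1}> = 1. As <x,z> = <z,y> = 1
  implies E_{z+y} (E_{x+z} x) = y, a suitable z supported off the cleaned coordinates yields
  two transvections that move x to e_{p+1} and fix the cleaned basis vectors. Afterwards
  y = g f_{p+1} has <e_{p+1}, y> = 1, and two more transvections, now also orthogonal to
  e_{p+1}, move y to f_{p+1}. After w rounds the images of the remaining basis vectors
  vanish on the cleaned coordinates, i.e. lie in the span of the uncleaned basis vectors. *)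

declare add_bit_eq_xor[simp del] mult_bit_eq_and[simp del]

lemma bit_add_self[simp]: "(a::bit) + a = 0"
  by (cases a) (auto simp: add_bit_eq_xor)

definition partner :: "nat \<Rightarrow> nat \<Rightarrow> nat" where
  "partner n k = (if k < n then n + k else k - n)"

lemma partner_less: "k < 2*n \<Longrightarrow> partner n k < 2*n"
  by (auto simp: partner_def)

lemma partner_partner[simp]: "k < 2*n \<Longrightarrow> partner n (partner n k) = k"
  by (auto simp: partner_def)

lemma partner_low: "p < n \<Longrightarrow> partner n p = n + p"
  by (simp add: partner_def)

lemma partner_high[simp]: "partner n (n + p) = p"
  by (simp add: partner_def)

section \<open>The symplectic form\<close>

lemma Jmat_carrier: "Jmat n \<in> carrier_mat (2*n) (2*n)"
  by (simp add: Jmat_def mult_2)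

lemma Jmat_index:
  "k < 2*n \<Longrightarrow> j < 2*n \<Longrightarrow> Jmat n $$ (k,j) = (if j = partner n k then 1 else 0)"
  by (auto simp: Jmat_def partner_def)

lemma Jmat_mult_vec_index:
  assumes "v \<in> carrier_vec (2*n)" and "k < 2*n"
  shows "(Jmat n *\<^sub>v v) $ k = v $ partner n k"
proof -
  have "(Jmat n *\<^sub>v v) $ k = (\<Sum>j<2*n. Jmat n $$ (k,j) * v $ j)"
    using assms Jmat_carrier[of n] by (simp add: scalar_prod_def lessThan_atLeast0)
  also have "\<dots> = (\<Sum>j<2*n. if j = partner n k then v $ j else 0)"
    using assms by (intro sum.cong) (auto simp: Jmat_index)
  also have "\<dots> = v $ partner n k"
    using partner_less[OF assms(2)] by simp
  finally show ?thesis .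
qed

lemma sform_eq_sum:
  assumes "u \<in> carrier_vec (2*n)" and "v \<in> carrier_vec (2*n)"
  shows "sform n u v = (\<Sum>k<2*n. u $ k * v $ partner n k)"
proof -
  have "sform n u v = (\<Sum>k\<in>{0..<2*n}. u $ k * (Jmat n *\<^sub>v v) $ k)"
    using assms Jmat_carrier[of n] by (simp add: sform_def scalar_prod_def)
  then show ?thesis
    using assms by (auto simp: lessThan_atLeast0 Jmat_mult_vec_index intro!: sum.cong)
qed

lemma sum_lessThan_add: "(\<Sum>k<n+m. f k) = (\<Sum>k<n. f k) + (\<Sum>k<m. f (n+k::nat))"
  by (induction m) (auto simp: add.assoc)

lemma sform_eq_sum_halves:
  assumes "u \<in> carrier_vec (2*n)" and "v \<in> carrier_vec (2*n)"
  shows "sform n u v = (\<Sum>k<n. u $ k * v $ (n+k)) + (\<Sum>k<n. u $ (n+k) * v $ k)"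
  unfolding sform_eq_sum[OF assms] mult_2 sum_lessThan_add
  by (intro arg_cong2[where f="(+)"] sum.cong) (auto simp: partner_def)

lemma sform_self: "u \<in> carrier_vec (2*n) \<Longrightarrow> sform n u u = 0"
  using sform_eq_sum_halves[of u n u] by (simp add: mult.commute)

lemma sform_commute:
  assumes "u \<in> carrier_vec (2*n)" and "v \<in> carrier_vec (2*n)"
  shows "sform n u v = sform n v u"
  using sform_eq_sum_halves[OF assms] sform_eq_sum_halves[OF assms(2,1)]
  by (simp add: mult.commute add.commute)

lemma sform_add_left:
  assumes "a \<in> carrier_vec (2*n)" "b \<in> carrier_vec (2*n)" "c \<in> carrier_vec (2*n)"
  shows "sform n (a + b) c = sform n a c + sform n b c"
  using assms by (simp add: sform_eq_sum sum.distrib distrib_right)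

lemma sform_add_right:
  assumes "a \<in> carrier_vec (2*n)" "b \<in> carrier_vec (2*n)" "c \<in> carrier_vec (2*n)"
  shows "sform n a (b + c) = sform n a b + sform n a c"
  using assms by (simp add: sform_eq_sum sum.distrib distrib_left partner_less)

lemma sform_smult_left:
  assumes "a \<in> carrier_vec (2*n)" "c \<in> carrier_vec (2*n)"
  shows "sform n (x \<cdot>\<^sub>v a) c = x * sform n a c"
  using assms by (simp add: sform_eq_sum sum_distrib_left mult.assoc)

lemma sform_smult_right:
  assumes "a \<in> carrier_vec (2*n)" "c \<in> carrier_vec (2*n)"
  shows "sform n a (x \<cdot>\<^sub>v c) = x * sform n a c"
  using assms by (simp add: sform_eq_sum sum_distrib_left partner_less mult.left_commute)

lemma sform_zero_left: "c \<in> carrier_vec (2*n) \<Longrightarrow> sform n (0\<^sub>v (2*n)) c = 0"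
  by (simp add: sform_eq_sum)

lemma sform_unit_vec_right:
  assumes "u \<in> carrier_vec (2*n)" and "i < 2*n"
  shows "sform n u (unit_vec (2*n) i) = u $ partner n i"
proof -
  have "u $ k * unit_vec (2*n) i $ partner n k = (if k = partner n i then u $ k else 0)"
    if "k < 2*n" for k
    using that assms(2) partner_less[OF that] partner_partner[OF that]
      partner_partner[OF assms(2)] by auto
  then have "sform n u (unit_vec (2*n) i) = (\<Sum>k<2*n. if k = partner n i then u $ k else 0)"
    using assms(1) by (simp add: sform_eq_sum)
  also have "\<dots> = u $ partner n i"
    using partner_less[OF assms(2)] by simp
  finally show ?thesis .
qed

section \<open>Transvections\<close>

lemma transv_carrier[simp]:
  "u \<in> carrier_vec (2*n) \<Longrightarrow> v \<in> carrier_vec (2*n) \<Longrightarrow> transv n u v \<in> carrier_vec (2*n)"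
  by (simp add: transv_def)

lemma transv_eq_self:
  assumes "u \<in> carrier_vec (2*n)" "v \<in> carrier_vec (2*n)" and "sform n u v = 0"
  shows "transv n u v = v"
  using assms by (intro eq_vecI) (auto simp: transv_def)

lemma transv_unit_vec:
  assumes "u \<in> carrier_vec (2*n)" "k < 2*n" and "u $ partner n k = 0"
  shows "transv n u (unit_vec (2*n) k) = unit_vec (2*n) k"
  using assms by (intro transv_eq_self) (auto simp: sform_unit_vec_right)

lemma transv_swap:
  assumes "x \<in> carrier_vec (2*n)" "y \<in> carrier_vec (2*n)" and "sform n x y = 1"
  shows "transv n (x + y) x = y"
proof -
  have "sform n (x + y) x = 1"
    using assms by (simp add: sform_add_left sform_self sform_commute[of y n x])
  then show ?thesis
    using assms by (intro eq_vecI) (auto simp: transv_def)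
qed

lemma transv_transv_swap:
  assumes "x \<in> carrier_vec (2*n)" "y \<in> carrier_vec (2*n)" "z \<in> carrier_vec (2*n)"
    and "sform n x z = 1" "sform n z y = 1"
  shows "transv n (z + y) (transv n (x + z) x) = y"
  using assms by (simp add: transv_swap)

lemma sform_transv:
  assumes "u \<in> carrier_vec (2*n)" "a \<in> carrier_vec (2*n)" "b \<in> carrier_vec (2*n)"
  shows "sform n (transv n u a) (transv n u b) = sform n a b"
proof -
  let ?s = "sform n u a" and ?t = "sform n u b"
  have "sform n (transv n u a) (transv n u b)
     = sform n a b + ?t * sform n a u + (?s * sform n u b + ?s * (?t * sform n u u))"
    using assms
    by (simp add: transv_def sform_add_left sform_add_right sform_smult_left sform_smult_right
        algebra_simps)
  also have "\<dots> = sform n a b + (?t * ?s + ?s * ?t)"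
    using assms by (simp add: sform_self sform_commute[of a n u] add.assoc)
  also have "\<dots> = sform n a b"
    by (simp add: mult.commute)
  finally show ?thesis .
qed

definition transv_seq :: "nat \<Rightarrow> bit vec list \<Rightarrow> bit vec \<Rightarrow> bit vec" where
  "transv_seq n us v = foldl (\<lambda>v u. transv n u v) v us"

lemma transv_seq_simps[simp]:
  "transv_seq n [] v = v"
  "transv_seq n (u # us) v = transv_seq n us (transv n u v)"
  "transv_seq n (us @ vs) v = transv_seq n vs (transv_seq n us v)"
  by (simp_all add: transv_seq_def)

lemma rmult_eq_transpose_mult_vec:
  "v \<in> carrier_vec (dim_row A) \<Longrightarrow> v \<cdot>\<^sub>r A = transpose_mat A *\<^sub>v v"
  by (intro eq_vecI) (auto simp: rmult_def intro: comm_scalar_prod[of _ "dim_row A"])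

lemma rmult_carrier: "A \<in> carrier_mat nr nc \<Longrightarrow> v \<cdot>\<^sub>r A \<in> carrier_vec nc"
  by (simp add: rmult_def carrier_matD)

lemma rmult_mult_mat:
  assumes "v \<in> carrier_vec nr" "A \<in> carrier_mat nr nc" "B \<in> carrier_mat nc nd"
  shows "v \<cdot>\<^sub>r (A * B) = (v \<cdot>\<^sub>r A) \<cdot>\<^sub>r B"
proof -
  have "v \<cdot>\<^sub>r (A * B) = (transpose_mat B * transpose_mat A) *\<^sub>v v"
    using assms by (simp add: rmult_eq_transpose_mult_vec transpose_mult)
  also have "\<dots> = transpose_mat B *\<^sub>v (transpose_mat A *\<^sub>v v)"
    using assms by (intro assoc_mult_mat_vec) auto
  also have "\<dots> = (v \<cdot>\<^sub>r A) \<cdot>\<^sub>r B"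
    using assms by (simp add: rmult_eq_transpose_mult_vec)
  finally show ?thesis .
qed

lemma Smat_carrier[simp]: "Smat n u \<in> carrier_mat (2*n) (2*n)"
  using mat_of_rows_carrier(1)[of "2*n" "map (\<lambda>i. transv n u (unit_vec (2*n) i)) [0..<2*n]"]
  by (simp add: Smat_def)

lemma Smat_dims[simp]: "dim_row (Smat n u) = 2*n" "dim_col (Smat n u) = 2*n"
  using Smat_carrier carrier_matD by blast+

lemma Smat_index:
  "i < 2*n \<Longrightarrow> j < 2*n \<Longrightarrow> Smat n u $$ (i,j) = transv n u (unit_vec (2*n) i) $ j"
  by (simp add: Smat_def mat_of_rows_index)

lemma rmult_Smat:
  assumes v: "v \<in> carrier_vec (2*n)" and u: "u \<in> carrier_vec (2*n)"
  shows "v \<cdot>\<^sub>r Smat n u = transv n u v"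
proof (rule eq_vecI)
  show "dim_vec (v \<cdot>\<^sub>r Smat n u) = dim_vec (transv n u v)"
    using u v by (simp add: rmult_def transv_def carrier_matD)
  fix j assume "j < dim_vec (transv n u v)"
  then have j: "j < 2*n"
    using u v by (simp add: transv_def)
  have "v $ i * Smat n u $$ (i,j) = (if i = j then v $ i else 0) + v $ i * u $ partner n i * u $ j"
    if "i < 2*n" for i
    using that j u by (simp add: Smat_index transv_def sform_unit_vec_right distrib_left mult.assoc)
  then have "(v \<cdot>\<^sub>r Smat n u) $ j
      = (\<Sum>i<2*n. (if i = j then v $ i else 0) + v $ i * u $ partner n i * u $ j)"
    using j v by (simp add: rmult_def scalar_prod_def lessThan_atLeast0 carrier_matD)
  also have "\<dots> = v $ j + sform n v u * u $ j"
    using j u v by (simp add: sum.distrib sform_eq_sum sum_distrib_right)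
  also have "\<dots> = transv n u v $ j"
    using j u v by (simp add: transv_def sform_commute[of u n v])
  finally show "(v \<cdot>\<^sub>r Smat n u) $ j = transv n u v $ j" .
qed

lemma rmult_foldl_Smat:
  assumes "M \<in> carrier_mat (2*n) (2*n)" "v \<in> carrier_vec (2*n)" "set us \<subseteq> carrier_vec (2*n)"
  shows "v \<cdot>\<^sub>r foldl (*) M (map (Smat n) us) = transv_seq n us (v \<cdot>\<^sub>r M)"
  using assms
proof (induction us arbitrary: M)
  case Nil
  then show ?case by simp
next
  case (Cons u us)
  then have "v \<cdot>\<^sub>r (M * Smat n u) = transv n u (v \<cdot>\<^sub>r M)"
    using rmult_mult_mat[OF _ _ Smat_carrier] rmult_Smat[OF rmult_carrier] by simp
  with Cons show ?case by simp
qed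

section \<open>Symplectic maps\<close>

definition sympl_map :: "nat \<Rightarrow> (bit vec \<Rightarrow> bit vec) \<Rightarrow> bool" where
  "sympl_map n f \<longleftrightarrow> (\<forall>v\<in>carrier_vec (2*n). f v \<in> carrier_vec (2*n)) \<and>
     (\<forall>a\<in>carrier_vec (2*n). \<forall>b\<in>carrier_vec (2*n). sform n (f a) (f b) = sform n a b)"

lemma sympl_map_comp: "sympl_map n f \<Longrightarrow> sympl_map n g \<Longrightarrow> sympl_map n (\<lambda>v. g (f v))"
  by (simp add: sympl_map_def)

lemma sympl_map_transv: "u \<in> carrier_vec (2*n) \<Longrightarrow> sympl_map n (transv n u)"
  by (simp add: sympl_map_def sform_transv)

lemma sympl_map_transv_seq: "set us \<subseteq> carrier_vec (2*n) \<Longrightarrow> sympl_map n (transv_seq n us)"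
proof (induction us)
  case Nil
  then show ?case by (simp add: sympl_map_def)
next
  case (Cons u us)
  then have "sympl_map n (\<lambda>v. transv_seq n us (transv n u v))"
    by (intro sympl_map_comp[OF sympl_map_transv]) auto
  then show ?case by simp
qed

lemma sympl_map_rmult:
  assumes "symplectic n M"
  shows "sympl_map n (\<lambda>v. v \<cdot>\<^sub>r M)"
proof -
  have M: "M \<in> carrier_mat (2*n) (2*n)" and MJ: "M * Jmat n * transpose_mat M = Jmat n"
    using assms by (auto simp: symplectic_def)
  have J: "Jmat n \<in> carrier_mat (2*n) (2*n)"
    by (rule Jmat_carrier)
  have "sform n (a \<cdot>\<^sub>r M) (b \<cdot>\<^sub>r M) = sform n a b"
    if a: "a \<in> carrier_vec (2*n)" and b: "b \<in> carrier_vec (2*n)" for a b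
  proof -
    have "sform n (a \<cdot>\<^sub>r M) (b \<cdot>\<^sub>r M)
        = (transpose_mat M *\<^sub>v a) \<bullet> (Jmat n *\<^sub>v (transpose_mat M *\<^sub>v b))"
      using M a b by (simp add: sform_def rmult_eq_transpose_mult_vec)
    also have "\<dots> = a \<bullet> (M *\<^sub>v (Jmat n *\<^sub>v (transpose_mat M *\<^sub>v b)))"
      using M a b J by (intro transpose_vec_mult_scalar) auto
    also have "M *\<^sub>v (Jmat n *\<^sub>v (transpose_mat M *\<^sub>v b)) = (M * Jmat n) *\<^sub>v (transpose_mat M *\<^sub>v b)"
      using M J b by (intro assoc_mult_mat_vec[symmetric]) auto
    also have "\<dots> = (M * Jmat n * transpose_mat M) *\<^sub>v b"
      using M J b by (intro assoc_mult_mat_vec[symmetric]) auto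
    finally show ?thesis
      using MJ by (simp add: sform_def)
  qed
  then show ?thesis
    using M by (auto simp: sympl_map_def rmult_carrier)
qed

lemma sympl_map_index:
  assumes "sympl_map n g" "v \<in> carrier_vec (2*n)" "j < 2*n"
    and "g (unit_vec (2*n) (partner n j)) = unit_vec (2*n) (partner n j)"
  shows "g v $ j = v $ j"
proof -
  have pj: "partner n j < 2*n"
    using assms(3) by (rule partner_less)
  have "g v $ j = sform n (g v) (g (unit_vec (2*n) (partner n j)))"
    using assms sympl_map_def by (simp add: sform_unit_vec_right pj)
  also have "\<dots> = sform n v (unit_vec (2*n) (partner n j))"
    using assms(1,2) pj unfolding sympl_map_def by auto
  also have "\<dots> = v $ j"
    using assms(2,3) pj by (simp add: sform_unit_vec_right)
  finally show ?thesis .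
qed

section \<open>Cleaning qubits one at a time\<close>

text \<open>Coordinates are numbered from 0: \<open>e\<^sub>i\<close> is coordinate \<open>i - 1\<close> and \<open>f\<^sub>i\<close> is
  coordinate \<open>n + i - 1\<close>.\<close>

definition qubit_coords :: "nat \<Rightarrow> nat \<Rightarrow> nat set" where
  "qubit_coords n p = {..<p} \<union> {n..<n+p}"

lemma qubit_coords_less: "p \<le> n \<Longrightarrow> k \<in> qubit_coords n p \<Longrightarrow> k < 2*n"
  by (auto simp: qubit_coords_def)

lemma partner_qubit_coords:
  "p \<le> n \<Longrightarrow> k \<in> qubit_coords n p \<Longrightarrow> partner n k \<in> qubit_coords n p"
  by (auto simp: qubit_coords_def partner_def)

lemma qubit_coords_Suc: "qubit_coords n (Suc p) = insert p (insert (n+p) (qubit_coords n p))"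
  by (auto simp: qubit_coords_def)

lemma not_in_qubit_coords[simp]: "p < n \<Longrightarrow> p \<notin> qubit_coords n p" "n + p \<notin> qubit_coords n p"
  by (auto simp: qubit_coords_def)

lemma transv_fixes_qubit_coords:
  assumes "u \<in> carrier_vec (2*n)" "p \<le> n" "\<forall>j\<in>qubit_coords n p. u $ j = 0"
    and "k \<in> qubit_coords n p"
  shows "transv n u (unit_vec (2*n) k) = unit_vec (2*n) k"
proof (rule transv_unit_vec)
  show "k < 2*n"
    using assms(2,4) by (rule qubit_coords_less)
  show "u $ partner n k = 0"
    using assms(2-4) partner_qubit_coords by blast
qed (rule assms(1))

lemma transv_transv_to_e:
  assumes p: "p < n" and x: "x \<in> carrier_vec (2*n)" "x \<noteq> 0\<^sub>v (2*n)"
    and x_vanishes: "\<forall>j\<in>qubit_coords n p. x $ j = 0"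
  shows "\<exists>u1 u2. u1 \<in> carrier_vec (2*n) \<and> u2 \<in> carrier_vec (2*n) \<and>
    (\<forall>j\<in>qubit_coords n p. u1 $ j = 0) \<and> (\<forall>j\<in>qubit_coords n p. u2 $ j = 0) \<and>
    transv n u2 (transv n u1 x) = unit_vec (2*n) p"
proof -
  let ?U = "unit_vec (2*n)"
  have "\<exists>z \<in> carrier_vec (2*n). (\<forall>j\<in>qubit_coords n p. z $ j = 0) \<and>
      sform n x z = 1 \<and> z $ (n+p) = 1"
  proof -
    consider "x $ (n+p) = 1" | "x $ (n+p) = 0" "x $ p = 1" | "x $ (n+p) = 0" "x $ p = 0"
      by (metis bit_not_one_iff)
    then show ?thesis
    proof cases
      case 1
      then show ?thesis
        using x p x_vanishes qubit_coords_less[of p n]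
        by (intro bexI[of _ "x + ?U p"])
          (auto simp: sform_add_right sform_self sform_unit_vec_right partner_low)
    next
      case 2
      then show ?thesis
        using x p qubit_coords_less[of p n]
        by (intro bexI[of _ "?U (n+p)"]) (auto simp: sform_unit_vec_right)
    next
      case 3
      obtain c where c: "c < 2*n" "x $ c = 1"
        using x by (metis bit_not_zero_iff carrier_vecD eq_vecI index_zero_vec)
      then have "c \<notin> qubit_coords n p" "c \<noteq> p" "c \<noteq> n + p"
        using x_vanishes 3 by auto
      then have "partner n c \<notin> qubit_coords n p" "partner n c \<noteq> n + p"
        using c(1) p partner_qubit_coords[of p n "partner n c"] partner_low[OF p]
        by (auto dest: arg_cong[of _ _ "partner n"])
      then show ?thesis
        using x p c 3 qubit_coords_less[of p n] partner_less[OF c(1)]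
        by (intro bexI[of _ "?U (n+p) + ?U (partner n c)"])
          (auto simp: sform_add_right sform_unit_vec_right)
    qed
  qed
  then obtain z where z: "z \<in> carrier_vec (2*n)" "\<forall>j\<in>qubit_coords n p. z $ j = 0"
    "sform n x z = 1" "z $ (n+p) = 1" by blast
  have "sform n z (?U p) = 1"
    using z p by (simp add: sform_unit_vec_right partner_low)
  then have "transv n (z + ?U p) (transv n (x + z) x) = ?U p"
    using x z by (intro transv_transv_swap) auto
  moreover have "\<forall>j\<in>qubit_coords n p. (x + z) $ j = 0 \<and> (z + ?U p) $ j = 0"
    using x z x_vanishes p qubit_coords_less[of p n] by auto
  ultimately show ?thesis
    using x z by - (rule exI[of _ "x + z"], rule exI[of _ "z + ?U p"], auto)
qed

lemma transv_transv_to_f: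
  assumes p: "p < n" and y: "y \<in> carrier_vec (2*n)" "y $ (n+p) = 1"
    and y_vanishes: "\<forall>j\<in>qubit_coords n p. y $ j = 0"
  shows "\<exists>u1 u2. u1 \<in> carrier_vec (2*n) \<and> u2 \<in> carrier_vec (2*n) \<and>
    (\<forall>j\<in>insert (n+p) (qubit_coords n p). u1 $ j = 0) \<and>
    (\<forall>j\<in>insert (n+p) (qubit_coords n p). u2 $ j = 0) \<and>
    transv n u2 (transv n u1 y) = unit_vec (2*n) (n+p)"
proof -
  let ?U = "unit_vec (2*n)"
  have coords: "j < 2*n" if "j \<in> insert (n+p) (qubit_coords n p)" for j
    using that p qubit_coords_less[of p n] by auto
  consider "y $ p = 1" | "y $ p = 0"
    by (metis bit_not_one_iff)
  then show ?thesis
  proof cases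
    case 1
    then have "transv n (y + ?U (n+p)) y = ?U (n+p)"
      using y p by (intro transv_swap) (auto simp: sform_unit_vec_right)
    moreover have "transv n (0\<^sub>v (2*n)) (?U (n+p)) = ?U (n+p)"
      by (intro transv_eq_self) (auto simp: sform_zero_left)
    moreover have "\<forall>j\<in>insert (n+p) (qubit_coords n p). (y + ?U (n+p)) $ j = 0"
      using y y_vanishes coords by auto
    ultimately show ?thesis
      using y coords by - (rule exI[of _ "y + ?U (n+p)"], rule exI[of _ "0\<^sub>v (2*n)"], auto)
  next
    case 2
    define z :: "bit vec" where "z = ?U p + ?U (n+p)"
    have z: "z \<in> carrier_vec (2*n)"
      by (simp add: z_def)
    have "sform n y z = 1" "sform n z (?U (n+p)) = 1"
      using y z p 2 by (auto simp: z_def sform_add_right sform_unit_vec_right partner_low)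
    then have "transv n (z + ?U (n+p)) (transv n (y + z) y) = ?U (n+p)"
      using y z by (intro transv_transv_swap) auto
    moreover have "\<forall>j\<in>insert (n+p) (qubit_coords n p). (y + z) $ j = 0 \<and> (z + ?U (n+p)) $ j = 0"
      using y y_vanishes coords p by (auto simp: z_def)
    ultimately show ?thesis
      using y z by - (rule exI[of _ "y + z"], rule exI[of _ "z + ?U (n+p)"], auto)
  qed
qed

lemma sympl_map_index_qubit_coords:
  assumes "sympl_map n g" "p \<le> n" "v \<in> carrier_vec (2*n)" "j \<in> qubit_coords n p"
    and "\<forall>k\<in>qubit_coords n p. g (unit_vec (2*n) k) = unit_vec (2*n) k"
  shows "g v $ j = v $ j"
proof (rule sympl_map_index[OF assms(1,3)])
  show "j < 2*n"
    using assms(2,4) by (rule qubit_coords_less)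
  show "g (unit_vec (2*n) (partner n j)) = unit_vec (2*n) (partner n j)"
    using assms(2,4,5) partner_qubit_coords by blast
qed

lemma clean_qubit_e:
  assumes g: "sympl_map n g" and p: "p < n"
    and fixed: "\<forall>k\<in>qubit_coords n p. g (unit_vec (2*n) k) = unit_vec (2*n) k"
  shows "\<exists>u1 u2. u1 \<in> carrier_vec (2*n) \<and> u2 \<in> carrier_vec (2*n) \<and>
    (\<forall>k\<in>insert p (qubit_coords n p).
      transv n u2 (transv n u1 (g (unit_vec (2*n) k))) = unit_vec (2*n) k)"
proof -
  let ?U = "unit_vec (2*n)"
  have p': "p \<le> n" "p < 2*n" "n + p < 2*n"
    using p by auto
  define x where "x = g (?U p)"
  have x: "x \<in> carrier_vec (2*n)"
    using g p' by (simp add: sympl_map_def x_def)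
  have "sform n x (g (?U (n+p))) = sform n (?U p) (?U (n+p))"
    using g p' by (simp add: sympl_map_def x_def)
  also have "\<dots> = 1"
    using p' by (simp add: sform_unit_vec_right)
  finally have "x \<noteq> 0\<^sub>v (2*n)"
    using g p' by (auto simp: sympl_map_def sform_zero_left)
  moreover have "\<forall>j\<in>qubit_coords n p. x $ j = 0"
    using sympl_map_index_qubit_coords[OF g p'(1) _ _ fixed] p' p qubit_coords_less[OF p'(1)]
    by (auto simp: x_def)
  ultimately obtain u1 u2 where u: "u1 \<in> carrier_vec (2*n)" "u2 \<in> carrier_vec (2*n)"
      "\<forall>j\<in>qubit_coords n p. u1 $ j = 0" "\<forall>j\<in>qubit_coords n p. u2 $ j = 0"
      "transv n u2 (transv n u1 x) = ?U p"
    using transv_transv_to_e[OF p x] by blast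
  then show ?thesis
    using fixed transv_fixes_qubit_coords[OF u(1) p'(1) u(3)]
      transv_fixes_qubit_coords[OF u(2) p'(1) u(4)]
    by (intro exI[of _ u1] exI[of _ u2]) (auto simp: x_def)
qed

lemma clean_qubit_f:
  assumes g: "sympl_map n g" and p: "p < n"
    and fixed: "\<forall>k\<in>insert p (qubit_coords n p). g (unit_vec (2*n) k) = unit_vec (2*n) k"
  shows "\<exists>u1 u2. u1 \<in> carrier_vec (2*n) \<and> u2 \<in> carrier_vec (2*n) \<and>
    (\<forall>k\<in>qubit_coords n (Suc p).
      transv n u2 (transv n u1 (g (unit_vec (2*n) k))) = unit_vec (2*n) k)"
proof -
  let ?U = "unit_vec (2*n)"
  have p': "p \<le> n" "p < 2*n" "n + p < 2*n"
    using p by auto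
  define y where "y = g (?U (n+p))"
  have y: "y \<in> carrier_vec (2*n)"
    using g p' by (simp add: sympl_map_def y_def)
  have "y $ (n+p) = ?U (n+p) $ (n+p)"
    unfolding y_def using sympl_map_index[OF g unit_vec_carrier, of "n+p"] fixed p' by simp
  moreover have "\<forall>j\<in>qubit_coords n p. y $ j = 0"
    using sympl_map_index_qubit_coords[OF g p'(1) _ _] fixed p' qubit_coords_less[OF p'(1)]
    by (auto simp: y_def)
  ultimately obtain u1 u2 where u: "u1 \<in> carrier_vec (2*n)" "u2 \<in> carrier_vec (2*n)"
      "\<forall>j\<in>insert (n+p) (qubit_coords n p). u1 $ j = 0"
      "\<forall>j\<in>insert (n+p) (qubit_coords n p). u2 $ j = 0"
      "transv n u2 (transv n u1 y) = ?U (n+p)"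
    using transv_transv_to_f[OF p y] p' by auto
  have "transv n u (?U k) = ?U k"
    if "u \<in> {u1, u2}" and "k \<in> insert p (qubit_coords n p)" for u k
  proof -
    have "u \<in> carrier_vec (2*n)" "\<forall>j\<in>qubit_coords n p. u $ j = 0" "u $ (n+p) = 0"
      using that(1) u(1-4) by auto
    then show ?thesis
      using that(2) transv_fixes_qubit_coords[OF _ p'(1)] transv_unit_vec[of u n p] p'
      by (auto simp: partner_low[OF p])
  qed
  then show ?thesis
    using u fixed by (intro exI[of _ u1] exI[of _ u2]) (auto simp: qubit_coords_Suc y_def)
qed

lemma clean_qubit:
  assumes g: "sympl_map n g" and p: "p < n"
    and fixed: "\<forall>k\<in>qubit_coords n p. g (unit_vec (2*n) k) = unit_vec (2*n) k"
  shows "\<exists>us. length us = 4 \<and> set us \<subseteq> carrier_vec (2*n) \<and>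
    (\<forall>k\<in>qubit_coords n (Suc p). transv_seq n us (g (unit_vec (2*n) k)) = unit_vec (2*n) k)"
proof -
  obtain u1 u2 where u12: "u1 \<in> carrier_vec (2*n)" "u2 \<in> carrier_vec (2*n)"
    "\<forall>k\<in>insert p (qubit_coords n p).
      transv n u2 (transv n u1 (g (unit_vec (2*n) k))) = unit_vec (2*n) k"
    using clean_qubit_e[OF g p fixed] by blast
  have "sympl_map n (\<lambda>v. transv n u2 (transv n u1 (g v)))"
    using sympl_map_comp[OF sympl_map_comp[OF g sympl_map_transv] sympl_map_transv] u12(1,2) .
  then obtain u3 u4 where u34: "u3 \<in> carrier_vec (2*n)" "u4 \<in> carrier_vec (2*n)"
    "\<forall>k\<in>qubit_coords n (Suc p). transv n u4 (transv n u3
      (transv n u2 (transv n u1 (g (unit_vec (2*n) k))))) = unit_vec (2*n) k"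
    using clean_qubit_f[OF _ p u12(3)] by blast
  then show ?thesis
    using u12(1,2) by (intro exI[of _ "[u1, u2, u3, u4]"]) auto
qed

lemma clean_qubits:
  assumes "sympl_map n f" "p \<le> n"
  shows "\<exists>us. length us = 4 * p \<and> set us \<subseteq> carrier_vec (2*n) \<and>
    (\<forall>k\<in>qubit_coords n p. transv_seq n us (f (unit_vec (2*n) k)) = unit_vec (2*n) k)"
  using assms(2)
proof (induction p)
  case 0
  then show ?case
    by (intro exI[of _ "[]"]) (simp add: qubit_coords_def)
next
  case (Suc p)
  then obtain us where us: "length us = 4 * p" "set us \<subseteq> carrier_vec (2*n)"
    "\<forall>k\<in>qubit_coords n p. transv_seq n us (f (unit_vec (2*n) k)) = unit_vec (2*n) k"
    by auto
  have "sympl_map n (\<lambda>v. transv_seq n us (f v))"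
    using assms(1) sympl_map_transv_seq[OF us(2)] by (rule sympl_map_comp)
  then obtain vs where "length vs = 4" "set vs \<subseteq> carrier_vec (2*n)"
    "\<forall>k\<in>qubit_coords n (Suc p). transv_seq n vs (transv_seq n us (f (unit_vec (2*n) k)))
      = unit_vec (2*n) k"
    using clean_qubit us(3) Suc.prems by (metis Suc_le_lessD)
  then show ?case
    using us by (intro exI[of _ "us @ vs"]) auto
qed

section \<open>The uncleaned qubits\<close>

lemma (in vec_space) in_span_unit_vecs:
  assumes "v \<in> carrier_vec n" and "\<forall>j<n. j \<notin> I \<longrightarrow> v $ j = 0"
  shows "v \<in> span (unit_vec n ` I)"
proof -
  have units: "unit_vec n ` I \<subseteq> carrier_vec n"
    by auto
  have prefix: "vec n (\<lambda>k. if k < m then v $ k else 0) \<in> span (unit_vec n ` I)" for m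
  proof (induction m)
    case 0
    have "vec n (\<lambda>k. if k < 0 then v $ k else 0) = 0\<^sub>v n"
      by auto
    then show ?case
      using span_zero by simp
  next
    case (Suc m)
    show ?case
    proof (cases "m < n \<and> m \<in> I")
      case True
      have "vec n (\<lambda>k. if k < Suc m then v $ k else 0)
          = vec n (\<lambda>k. if k < m then v $ k else 0) + v $ m \<cdot>\<^sub>v unit_vec n m"
        by (intro eq_vecI) (auto simp: less_Suc_eq unit_vec_def)
      moreover have "v $ m \<cdot>\<^sub>v unit_vec n m \<in> span (unit_vec n ` I)"
        using True units by (intro smult_in_span span_mem) auto
      ultimately show ?thesis
        using span_add1[OF units Suc.IH] by simp
    next
      case False
      then have "vec n (\<lambda>k. if k < Suc m then v $ k else 0) = vec n (\<lambda>k. if k < m then v $ k else 0)"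
        using assms(2) by (auto simp: less_Suc_eq)
      then show ?thesis
        using Suc.IH by simp
    qed
  qed
  have "vec n (\<lambda>k. if k < n then v $ k else 0) = v"
    using assms(1) by (intro eq_vecI) auto
  with prefix[of n] show ?thesis
    by (simp only:)
qed

lemma sympl_map_unit_vec_in_span:
  assumes g: "sympl_map n g" and w: "w \<le> n"
    and fixed: "\<forall>k\<in>qubit_coords n w. g (unit_vec (2*n) k) = unit_vec (2*n) k"
    and k: "k \<in> {..<2*n} - qubit_coords n w"
  shows "g (unit_vec (2*n) k) \<in> span2 n (unit_vec (2*n) ` ({..<2*n} - qubit_coords n w))"
proof -
  have "\<forall>j<2*n. j \<notin> {..<2*n} - qubit_coords n w \<longrightarrow> g (unit_vec (2*n) k) $ j = 0"
  proof (intro allI impI)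
    fix j assume j: "j < 2*n" "j \<notin> {..<2*n} - qubit_coords n w"
    then have "g (unit_vec (2*n) k) $ j = unit_vec (2*n) k $ j"
      by (intro sympl_map_index_qubit_coords[OF g w unit_vec_carrier _ fixed]) simp
    also have "\<dots> = 0"
      using j k by auto
    finally show "g (unit_vec (2*n) k) $ j = 0" .
  qed
  moreover have "g (unit_vec (2*n) k) \<in> carrier_vec (2*n)"
    using g by (simp add: sympl_map_def)
  ultimately show ?thesis
    unfolding span2_def by (intro vec_space.in_span_unit_vecs)
qed

lemma cleaned_basis_subset:
  "ebas n ` {1..w} \<union> fbas n ` {1..w} \<subseteq> unit_vec (2*n) ` qubit_coords n w"
proof -
  have "i - 1 \<in> qubit_coords n w \<and> n + i - 1 \<in> qubit_coords n w" if "i \<in> {1..w}" for i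
    using that by (auto simp: qubit_coords_def)
  then show ?thesis
    by (auto simp: ebas_def fbas_def)
qed

lemma uncleaned_basis_eq:
  assumes "w \<le> n"
  shows "ebas n ` {w<..n} \<union> fbas n ` {w<..n} = unit_vec (2*n) ` ({..<2*n} - qubit_coords n w)"
proof -
  have shift: "{w<..n} = Suc ` {w..<n}"
    by (simp add: atLeastLessThanSuc_atLeastAtMost atLeastSucAtMost_greaterThanAtMost)
  have "ebas n ` {w<..n} = unit_vec (2*n) ` {w..<n}"
    unfolding shift image_image by (simp add: ebas_def)
  moreover have "fbas n ` {w<..n} = unit_vec (2*n) ` ((+) n ` {w..<n})"
    unfolding shift image_image by (simp add: fbas_def)
  moreover have "{w..<n} \<union> (+) n ` {w..<n} = {..<2*n} - qubit_coords n w"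
    using assms by (auto simp: qubit_coords_def)
  ultimately show ?thesis
    by (metis image_Un)
qed

theorem lemmaA1:
  fixes n w :: nat and M :: "bit mat"
  assumes "n \<ge> 1" and "symplectic n M" and "w \<le> n"
  shows "\<exists>us :: bit vec list. length us = 4 * w \<and> set us \<subseteq> carrier_vec (2*n) \<and>
    (let M' = foldl (*) M (map (Smat n) us) in
      (\<forall>i \<in> {1..w}. ebas n i \<cdot>\<^sub>r M' = ebas n i \<and> fbas n i \<cdot>\<^sub>r M' = fbas n i) \<and>
      (\<forall>b \<in> ebas n ` {w<..n} \<union> fbas n ` {w<..n}.
          b \<cdot>\<^sub>r M' \<in> span2 n (ebas n ` {w<..n} \<union> fbas n ` {w<..n})))"
proof -
  have M: "M \<in> carrier_mat (2*n) (2*n)"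
    using assms(2) by (simp add: symplectic_def)
  obtain us where us: "length us = 4 * w" "set us \<subseteq> carrier_vec (2*n)"
    and cleaned: "\<forall>k\<in>qubit_coords n w. transv_seq n us (unit_vec (2*n) k \<cdot>\<^sub>r M) = unit_vec (2*n) k"
    using clean_qubits[OF sympl_map_rmult[OF assms(2)] assms(3)] by blast
  define M' where "M' = foldl (*) M (map (Smat n) us)"
  let ?g = "\<lambda>v. transv_seq n us (v \<cdot>\<^sub>r M)"
  have M'_rmult: "v \<cdot>\<^sub>r M' = ?g v" if "v \<in> carrier_vec (2*n)" for v
    unfolding M'_def using rmult_foldl_Smat[OF M that us(2)] .
  have g: "sympl_map n ?g"
    using sympl_map_rmult[OF assms(2)] sympl_map_transv_seq[OF us(2)] by (rule sympl_map_comp)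
  have "b \<cdot>\<^sub>r M' = b" if "b \<in> unit_vec (2*n) ` qubit_coords n w" for b
    using that cleaned M'_rmult by auto
  then have "\<forall>i \<in> {1..w}. ebas n i \<cdot>\<^sub>r M' = ebas n i \<and> fbas n i \<cdot>\<^sub>r M' = fbas n i"
    using cleaned_basis_subset by blast
  moreover have "\<forall>b \<in> ebas n ` {w<..n} \<union> fbas n ` {w<..n}.
      b \<cdot>\<^sub>r M' \<in> span2 n (ebas n ` {w<..n} \<union> fbas n ` {w<..n})"
    unfolding uncleaned_basis_eq[OF assms(3)]
    using sympl_map_unit_vec_in_span[OF g assms(3) cleaned] M'_rmult by auto
  ultimately show ?thesis
    using us(1,2) unfolding M'_def Let_def by (intro exI[of _ us] conjI)
qed

end
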